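(* Let $R$ be a commutative graded ring, $P$ a homogeneous prime ideal, $S=R\setminus P$ and $M$ a graded $R$-module. Then $S^{-1}M=0$ if and only if $\overline{\mathrm{Hom}}(M,E^g(R/P))=0$.
   Context: $\overline{\mathrm{Hom}}(M,N)=\bigoplus_{i\in\mathbb{Z}}\mathrm{Hom}_{Gr(R)}(M,N(i))$, where $Gr(R)$ is the category of graded $R$-modules with degree-preserving maps and $N(i)$ the grading shift; $E^g$ is the injective envelope in $Gr(R)$. *)

theory Defs
  imports "HOL-Algebra.Algebra"
begin

text \<open>A grading of (the additive group of) a ring/module G is a family g of additive
subgroups indexed by the integers such that G is their internal direct sum: every
element is uniquely a finite sum of homogeneous components.\<close>

definition decomp :: "('b, 'c) ring_scheme \<Rightarrow> (int \<Rightarrow> 'b set) \<Rightarrow> 'b \<Rightarrow> (int \<Rightarrow> 'b) \<Rightarrow> bool" where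
  "decomp G g x c \<longleftrightarrow> (\<forall>i. c i \<in> g i) \<and> finite {i. c i \<noteq> \<zero>\<^bsub>G\<^esub>}
      \<and> x = finsum G c {i. c i \<noteq> \<zero>\<^bsub>G\<^esub>}"

definition graded_group :: "('b, 'c) ring_scheme \<Rightarrow> (int \<Rightarrow> 'b set) \<Rightarrow> bool" where
  "graded_group G g \<longleftrightarrow> (\<forall>i. subgroup (g i) (add_monoid G))
      \<and> (\<forall>x\<in>carrier G. \<exists>!c. decomp G g x c)"

definition hcomp :: "('b, 'c) ring_scheme \<Rightarrow> (int \<Rightarrow> 'b set) \<Rightarrow> int \<Rightarrow> 'b \<Rightarrow> 'b" where
  "hcomp G g i x = (THE c. decomp G g x c) i"

definition graded_ring :: "'a ring \<Rightarrow> (int \<Rightarrow> 'a set) \<Rightarrow> bool" where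
  "graded_ring R gR \<longleftrightarrow> cring R \<and> graded_group R gR
      \<and> (\<forall>i j. \<forall>x\<in>gR i. \<forall>y\<in>gR j. x \<otimes>\<^bsub>R\<^esub> y \<in> gR (i + j))"

definition graded_module :: "'a ring \<Rightarrow> (int \<Rightarrow> 'a set) \<Rightarrow> ('a, 'b) module \<Rightarrow> (int \<Rightarrow> 'b set) \<Rightarrow> bool" where
  "graded_module R gR M gM \<longleftrightarrow> module R M \<and> graded_group M gM
      \<and> (\<forall>i j. \<forall>r\<in>gR i. \<forall>m\<in>gM j. r \<odot>\<^bsub>M\<^esub> m \<in> gM (i + j))"

definition homogeneous_ideal :: "'a ring \<Rightarrow> (int \<Rightarrow> 'a set) \<Rightarrow> 'a set \<Rightarrow> bool" where
  "homogeneous_ideal R gR P \<longleftrightarrow> ideal P R \<and> (\<forall>x\<in>P. \<forall>i. hcomp R gR i x \<in> P)"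

definition gr_submodule :: "'a ring \<Rightarrow> ('a, 'b) module \<Rightarrow> (int \<Rightarrow> 'b set) \<Rightarrow> 'b set \<Rightarrow> bool" where
  "gr_submodule R M gM A \<longleftrightarrow> submodule A R M \<and> (\<forall>x\<in>A. \<forall>i. hcomp M gM i x \<in> A)"

definition linear_on :: "'a ring \<Rightarrow> ('a, 'b) module \<Rightarrow> ('a, 'c) module \<Rightarrow> 'b set \<Rightarrow> ('b \<Rightarrow> 'c) \<Rightarrow> bool" where
  "linear_on R M N A f \<longleftrightarrow> (\<forall>x\<in>A. f x \<in> carrier N)
      \<and> (\<forall>x\<in>A. \<forall>y\<in>A. f (x \<oplus>\<^bsub>M\<^esub> y) = f x \<oplus>\<^bsub>N\<^esub> f y)
      \<and> (\<forall>r\<in>carrier R. \<forall>x\<in>A. f (r \<odot>\<^bsub>M\<^esub> x) = r \<odot>\<^bsub>N\<^esub> f x)"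

text \<open>A degree-preserving map (morphism of Gr(R)) from A (submodule of M) into the
shift N(d), where N(d)_j = N_(j+d).\<close>
definition graded_hom_on :: "'a ring \<Rightarrow> ('a, 'b) module \<Rightarrow> (int \<Rightarrow> 'b set)
    \<Rightarrow> ('a, 'c) module \<Rightarrow> (int \<Rightarrow> 'c set) \<Rightarrow> 'b set \<Rightarrow> int \<Rightarrow> ('b \<Rightarrow> 'c) \<Rightarrow> bool" where
  "graded_hom_on R M gM N gN A d f \<longleftrightarrow> linear_on R M N A f
      \<and> (\<forall>j. \<forall>x\<in>A \<inter> gM j. f x \<in> gN (j + d))"

text \<open>overline Hom(M,N) = direct sum over i of Hom_Gr(M, N(i)) is zero.\<close>
definition Hombar_zero :: "'a ring \<Rightarrow> ('a, 'b) module \<Rightarrow> (int \<Rightarrow> 'b set)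
    \<Rightarrow> ('a, 'c) module \<Rightarrow> (int \<Rightarrow> 'c set) \<Rightarrow> bool" where
  "Hombar_zero R M gM N gN \<longleftrightarrow> (\<forall>d f. graded_hom_on R M gM N gN (carrier M) d f
      \<longrightarrow> (\<forall>x\<in>carrier M. f x = \<zero>\<^bsub>N\<^esub>))"

text \<open>S^{-1}M = 0 for S = R - P: every fraction m/1 vanishes, i.e. every m is killed
by some element of S (this is exactly the definition of m/1 = 0 in S^{-1}M).\<close>
definition localization_zero :: "'a ring \<Rightarrow> 'a set \<Rightarrow> ('a, 'b) module \<Rightarrow> bool" where
  "localization_zero R P M \<longleftrightarrow>
     (\<forall>m\<in>carrier M. \<exists>s\<in>carrier R - P. s \<odot>\<^bsub>M\<^esub> m = \<zero>\<^bsub>M\<^esub>)"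

definition quot_module :: "'a ring \<Rightarrow> 'a set \<Rightarrow> ('a, 'a set) module" where
  "quot_module R P =
    \<lparr>carrier = a_rcosets\<^bsub>R\<^esub> P, monoid.mult = rcoset_mult R P,
     one = a_r_coset R P \<one>\<^bsub>R\<^esub>, ring.zero = P, ring.add = set_add R,
     smult = (\<lambda>r C. rcoset_mult R P (a_r_coset R P r) C)\<rparr>"

definition quot_grading :: "'a ring \<Rightarrow> (int \<Rightarrow> 'a set) \<Rightarrow> 'a set \<Rightarrow> int \<Rightarrow> 'a set set" where
  "quot_grading R gR P i = (\<lambda>x. a_r_coset R P x) ` gR i"

text \<open>Injectivity in Gr(R), tested against all graded modules whose carrier lives in
the type 'b (HOL cannot quantify over all types inside a formula): every
degree-preserving map from a graded submodule A of B to E extends to B.\<close>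
definition gr_injective :: "'b itself \<Rightarrow> 'a ring \<Rightarrow> (int \<Rightarrow> 'a set)
    \<Rightarrow> ('a, 'e) module \<Rightarrow> (int \<Rightarrow> 'e set) \<Rightarrow> bool" where
  "gr_injective _ R gR E gE \<longleftrightarrow>
     (\<forall>(B::('a, 'b) module) gB A f.
        graded_module R gR B gB \<and> gr_submodule R B gB A \<and> graded_hom_on R B gB E gE A 0 f
        \<longrightarrow> (\<exists>h. graded_hom_on R B gB E gE (carrier B) 0 h \<and> (\<forall>x\<in>A. h x = f x)))"

definition gr_essential :: "'a ring \<Rightarrow> ('a, 'e) module \<Rightarrow> (int \<Rightarrow> 'e set) \<Rightarrow> 'e set \<Rightarrow> bool" where
  "gr_essential R E gE N0 \<longleftrightarrow>
     (\<forall>N. gr_submodule R E gE N \<and> N \<noteq> {\<zero>\<^bsub>E\<^esub>} \<longrightarrow> N \<inter> N0 \<noteq> {\<zero>\<^bsub>E\<^esub>})"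

definition gr_injective_envelope :: "'b itself \<Rightarrow> 'a ring \<Rightarrow> (int \<Rightarrow> 'a set)
    \<Rightarrow> ('a, 'q) module \<Rightarrow> (int \<Rightarrow> 'q set) \<Rightarrow> ('a, 'e) module \<Rightarrow> (int \<Rightarrow> 'e set)
    \<Rightarrow> ('q \<Rightarrow> 'e) \<Rightarrow> bool" where
  "gr_injective_envelope T R gR Q gQ E gE iota \<longleftrightarrow>
     graded_module R gR E gE
     \<and> graded_hom_on R Q gQ E gE (carrier Q) 0 iota \<and> inj_on iota (carrier Q)
     \<and> gr_essential R E gE (iota ` carrier Q)
     \<and> gr_injective T R gR E gE"

end

theory Submission
  imports Defs
begin

text \<open>An element of \<open>M\<close> vanishes in \<open>S\<^sup>-\<^sup>1M\<close> iff it is killed by some \<open>s \<notin> P\<close>; such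
elements form a subgroup, so \<open>S\<^sup>-\<^sup>1M = 0\<close> can be tested on homogeneous elements, and
likewise a graded map vanishes once it vanishes on homogeneous elements.
If \<open>M\<close> is \<open>S\<close>-torsion and \<open>f : M \<rightarrow> E(d)\<close> is graded with \<open>f m \<noteq> 0\<close> for a homogeneous \<open>m\<close>,
the graded submodule \<open>R (f m)\<close> meets the essential submodule \<open>R/P\<close> of \<open>E\<close> nontrivially;
but it is killed by some \<open>s \<notin> P\<close>, while \<open>R/P\<close> has no \<open>S\<close>-torsion since \<open>P\<close> is prime.
Conversely, if a homogeneous \<open>m\<close> of degree \<open>k\<close> is not \<open>S\<close>-torsion, its annihilator lies
in \<open>P\<close>, so \<open>r m \<mapsto> r + P\<close> is a degree preserving map from \<open>Rm \<subseteq> M(k)\<close> to \<open>E\<close>. Graded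
injectivity of \<open>E\<close> extends it to \<open>M(k)\<close>, giving an element of \<open>Hom(M, E(-k))\<close> that
sends \<open>m\<close> to \<open>1 + P \<noteq> 0\<close>.\<close>

subsection \<open>Graded abelian groups\<close>

lemma graded_group_subgroup: "graded_group G g \<Longrightarrow> subgroup (g i) (add_monoid G)"
  unfolding graded_group_def by blast

lemma graded_group_subset: "graded_group G g \<Longrightarrow> g i \<subseteq> carrier G"
  using graded_group_subgroup subgroup.subset by fastforce

lemma graded_group_zero: "graded_group G g \<Longrightarrow> \<zero>\<^bsub>G\<^esub> \<in> g i"
  using graded_group_subgroup subgroup.one_closed by fastforce

lemma graded_group_ex1_decomp: "graded_group G g \<Longrightarrow> x \<in> carrier G \<Longrightarrow> \<exists>!c. decomp G g x c"
  unfolding graded_group_def by blast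

lemma hcomp_eq_decomp:
  assumes "graded_group G g" and "decomp G g x c" and "x \<in> carrier G"
  shows "(\<lambda>i. hcomp G g i x) = c"
  using the1_equality[where P = "decomp G g x", OF graded_group_ex1_decomp[OF assms(1,3)] assms(2)]
  unfolding hcomp_def by simp

lemma decomp_hcomp:
  assumes "graded_group G g" and "x \<in> carrier G"
  shows "decomp G g x (\<lambda>i. hcomp G g i x)"
  using theI'[OF graded_group_ex1_decomp[OF assms]] unfolding hcomp_def by simp

lemma hcomp_in_grade: "graded_group G g \<Longrightarrow> x \<in> carrier G \<Longrightarrow> hcomp G g i x \<in> g i"
  using decomp_hcomp[of G g x] unfolding decomp_def by blast

lemma hcomp_closed: "graded_group G g \<Longrightarrow> x \<in> carrier G \<Longrightarrow> hcomp G g i x \<in> carrier G"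
  using hcomp_in_grade[of G g x i] graded_group_subset[of G g i] by blast

lemma hcomp_eqI:
  assumes gg: "graded_group G g" and ag: "abelian_group G" and fin: "finite F"
    and c: "\<And>i. c i \<in> g i" and out: "\<And>i. i \<notin> F \<Longrightarrow> c i = \<zero>\<^bsub>G\<^esub>"
    and x: "x = finsum G c F"
  shows "hcomp G g i x = c i"
proof -
  interpret abelian_group G by fact
  have cc: "c \<in> F \<rightarrow> carrier G" using c graded_group_subset[OF gg] by blast
  have sub: "{i. c i \<noteq> \<zero>\<^bsub>G\<^esub>} \<subseteq> F" using out by blast
  have "finsum G c F = finsum G c {i. c i \<noteq> \<zero>\<^bsub>G\<^esub>}"
    by (rule add.finprod_mono_neutral_cong_right[OF fin sub]) (use cc in auto)
  then have "decomp G g x c"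
    unfolding decomp_def using c finite_subset[OF sub fin] x by auto
  moreover have "x \<in> carrier G" using x cc by simp
  ultimately show ?thesis using hcomp_eq_decomp[OF gg] by (simp add: fun_eq_iff)
qed

lemma hcomp_homogeneous:
  assumes gg: "graded_group G g" and ag: "abelian_group G" and x: "x \<in> g k"
  shows "hcomp G g i x = (if i = k then x else \<zero>\<^bsub>G\<^esub>)"
proof (rule hcomp_eqI[OF gg ag, of "{k}"])
  interpret abelian_group G by fact
  have "x \<in> carrier G" using x graded_group_subset[OF gg] by blast
  then show "x = finsum G (\<lambda>j. if j = k then x else \<zero>\<^bsub>G\<^esub>) {k}" by simp
qed (use x graded_group_zero[OF gg] in auto)

lemma graded_group_mem_if_hcomp_mem:
  assumes gg: "graded_group G g" and ag: "abelian_group G" and x: "x \<in> carrier G"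
    and zero: "\<zero>\<^bsub>G\<^esub> \<in> Z" and add: "\<And>a b. a \<in> Z \<Longrightarrow> b \<in> Z \<Longrightarrow> a \<oplus>\<^bsub>G\<^esub> b \<in> Z"
    and comp: "\<And>i. hcomp G g i x \<in> Z"
  shows "x \<in> Z"
proof -
  interpret abelian_group G by fact
  have sum: "finsum G (\<lambda>i. hcomp G g i x) F \<in> Z" if "finite F" for F
    using that
  proof (induction F rule: finite_induct)
    case (insert a F)
    have "(\<lambda>i. hcomp G g i x) \<in> F \<rightarrow> carrier G" "hcomp G g a x \<in> carrier G"
      using hcomp_closed[OF gg x] by auto
    with insert show ?case using add comp by simp
  qed (simp add: zero)
  from decomp_hcomp[OF gg x]
  have fin: "finite {i. hcomp G g i x \<noteq> \<zero>\<^bsub>G\<^esub>}"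
    and eq: "x = finsum G (\<lambda>i. hcomp G g i x) {i. hcomp G g i x \<noteq> \<zero>\<^bsub>G\<^esub>}"
    unfolding decomp_def by auto
  from sum[OF fin] show ?thesis by (subst eq)
qed

subsection \<open>Degree shifts\<close>

lemma decomp_shift:
  assumes ag: "abelian_group G" and sub: "\<And>i. g i \<subseteq> carrier G" and d: "decomp G g x c"
  shows "decomp G (\<lambda>j. g (j + k)) x (\<lambda>j. c (j + k))"
proof -
  interpret abelian_group G by fact
  define S where "S = {i. c i \<noteq> \<zero>\<^bsub>G\<^esub>}"
  have cg: "\<And>i. c i \<in> g i" and fin: "finite S" and x: "x = finsum G c S"
    using d unfolding decomp_def S_def by auto
  have S': "{j. c (j + k) \<noteq> \<zero>\<^bsub>G\<^esub>} = (\<lambda>i. i - k) ` S"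
    unfolding S_def by (auto intro: image_eqI[where x = "_ + k"])
  have "finsum G (\<lambda>j. c (j + k)) ((\<lambda>i. i - k) ` S) = finsum G (\<lambda>i. c (i - k + k)) S"
    by (rule finsum_reindex) (use cg sub in \<open>auto simp: inj_on_def\<close>)
  with x have "finsum G (\<lambda>j. c (j + k)) ((\<lambda>i. i - k) ` S) = x" by simp
  with cg S' fin show ?thesis unfolding decomp_def by auto
qed

lemma graded_group_shift:
  assumes gg: "graded_group G g" and ag: "abelian_group G"
  shows "graded_group G (\<lambda>j. g (j + k))"
  unfolding graded_group_def
proof (intro conjI allI ballI)
  fix i show "subgroup (g (i + k)) (add_monoid G)" by (rule graded_group_subgroup[OF gg])
next
  have sub: "\<And>i. g i \<subseteq> carrier G" using graded_group_subset[OF gg] .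
  fix x assume x: "x \<in> carrier G"
  show "\<exists>!c. decomp G (\<lambda>j. g (j + k)) x c"
  proof (rule ex1I)
    show "decomp G (\<lambda>j. g (j + k)) x (\<lambda>j. hcomp G g (j + k) x)"
      by (rule decomp_shift[OF ag sub decomp_hcomp[OF gg x]])
  next
    fix d assume "decomp G (\<lambda>j. g (j + k)) x d"
    then have "decomp G g x (\<lambda>j. d (j + - k))"
      using decomp_shift[OF ag, of "\<lambda>j. g (j + k)" x d "- k"] sub by simp
    then have "(\<lambda>j. hcomp G g j x) = (\<lambda>j. d (j + - k))"
      by (rule hcomp_eq_decomp[OF gg _ x])
    then show "d = (\<lambda>j. hcomp G g (j + k) x)" by (simp add: fun_eq_iff)
  qed
qed

lemma hcomp_shift:
  assumes gg: "graded_group G g" and ag: "abelian_group G" and x: "x \<in> carrier G"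
  shows "hcomp G (\<lambda>j. g (j + k)) j x = hcomp G g (j + k) x"
proof -
  have "decomp G (\<lambda>j. g (j + k)) x (\<lambda>j. hcomp G g (j + k) x)"
    by (rule decomp_shift[OF ag graded_group_subset[OF gg] decomp_hcomp[OF gg x]])
  from hcomp_eq_decomp[OF graded_group_shift[OF gg ag] this x] show ?thesis by metis
qed

subsection \<open>Graded modules\<close>

lemma (in module) finsum_smult_rdistr:
  assumes fin: "finite F" and c: "c \<in> F \<rightarrow> carrier R" and y: "y \<in> carrier M"
  shows "finsum R c F \<odot>\<^bsub>M\<^esub> y = finsum M (\<lambda>i. c i \<odot>\<^bsub>M\<^esub> y) F"
  using fin c
proof (induction F rule: finite_induct)
  case (insert a F)
  then have "c a \<in> carrier R" "c \<in> F \<rightarrow> carrier R" by auto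
  with insert y show ?case by (simp add: smult_l_distr Pi_def)
qed (simp add: y)

lemma hcomp_smult_homogeneous:
  assumes gr: "graded_ring R gR" and gm: "graded_module R gR M gM"
    and y: "y \<in> gM k" and r: "r \<in> carrier R"
  shows "hcomp M gM j (r \<odot>\<^bsub>M\<^esub> y) = hcomp R gR (j - k) r \<odot>\<^bsub>M\<^esub> y"
proof -
  have mod: "module R M" and ggM: "graded_group M gM"
    and mc: "\<And>i j r m. r \<in> gR i \<Longrightarrow> m \<in> gM j \<Longrightarrow> r \<odot>\<^bsub>M\<^esub> m \<in> gM (i + j)"
    using gm unfolding graded_module_def by auto
  have ggR: "graded_group R gR" using gr unfolding graded_ring_def by auto
  interpret module R M by fact
  have yc: "y \<in> carrier M" using y graded_group_subset[OF ggM] by blast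
  define c where "c = (\<lambda>i. hcomp R gR i r)"
  define F where "F = {i. c i \<noteq> \<zero>\<^bsub>R\<^esub>}"
  have fin: "finite F" and rF: "r = finsum R c F" and cg: "\<And>i. c i \<in> gR i"
    using decomp_hcomp[OF ggR r] unfolding decomp_def F_def c_def by auto
  have cc: "\<And>i. c i \<in> carrier R" using cg graded_group_subset[OF ggR] by blast
  have "r \<odot>\<^bsub>M\<^esub> y = finsum M (\<lambda>i. c i \<odot>\<^bsub>M\<^esub> y) F"
    using finsum_smult_rdistr[OF fin _ yc] rF cc by auto
  also have "\<dots> = finsum M (\<lambda>j. c (j - k) \<odot>\<^bsub>M\<^esub> y) ((\<lambda>i. i + k) ` F)"
    by (subst M.finsum_reindex) (use cc yc in \<open>auto simp: inj_on_def\<close>)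
  finally have "hcomp M gM j (r \<odot>\<^bsub>M\<^esub> y) = c (j - k) \<odot>\<^bsub>M\<^esub> y"
  proof (rule hcomp_eqI[OF ggM M.abelian_group_axioms, rotated -1])
    fix i
    show "c (i - k) \<odot>\<^bsub>M\<^esub> y \<in> gM i" using mc[OF cg[of "i - k"] y] by simp
    assume "i \<notin> (\<lambda>i. i + k) ` F"
    then have "c (i - k) = \<zero>\<^bsub>R\<^esub>" unfolding F_def by (auto intro: image_eqI[where x = "i - k"])
    then show "c (i - k) \<odot>\<^bsub>M\<^esub> y = \<zero>\<^bsub>M\<^esub>" using yc by simp
  qed (use fin in simp)
  then show ?thesis unfolding c_def .
qed

lemma graded_module_shift:
  assumes "graded_module R gR M gM"
  shows "graded_module R gR M (\<lambda>j. gM (j + k))"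
  using assms graded_group_shift[of M gM] module.axioms(2)[of R M]
  unfolding graded_module_def by (simp add: add.assoc)

lemma gr_submodule_shift:
  assumes gg: "graded_group M gM" and ag: "abelian_group M" and A: "gr_submodule R M gM A"
  shows "gr_submodule R M (\<lambda>j. gM (j + k)) A"
  unfolding gr_submodule_def
proof (intro conjI ballI allI)
  have sub: "submodule A R M" and closed: "\<forall>x\<in>A. \<forall>i. hcomp M gM i x \<in> A"
    using A unfolding gr_submodule_def by auto
  then show "submodule A R M" by blast
  fix x i assume x: "x \<in> A"
  then have "x \<in> carrier M" using subgroup.subset[OF submodule.axioms(1)[OF sub]] by auto
  then show "hcomp M (\<lambda>j. gM (j + k)) i x \<in> A" using hcomp_shift[OF gg ag] closed x by simp
qed

lemma graded_hom_on_shift: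
  "graded_hom_on R M (\<lambda>j. gM (j + k)) N gN A d f \<longleftrightarrow> graded_hom_on R M gM N gN A (d - k) f"
  unfolding graded_hom_on_def
proof (intro conj_cong[OF refl] iffI allI ballI)
  fix j x assume H: "\<forall>j. \<forall>x\<in>A \<inter> gM (j + k). f x \<in> gN (j + d)" and x: "x \<in> A \<inter> gM j"
  have "f x \<in> gN (j - k + d)" using H[rule_format, of x "j - k"] x by simp
  then show "f x \<in> gN (j + (d - k))" by (simp add: algebra_simps)
next
  fix j x assume H: "\<forall>j. \<forall>x\<in>A \<inter> gM j. f x \<in> gN (j + (d - k))" and x: "x \<in> A \<inter> gM (j + k)"
  have "f x \<in> gN (j + k + (d - k))" using H[rule_format, of x "j + k"] x by simp
  then show "f x \<in> gN (j + d)" by (simp add: algebra_simps)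
qed

lemma gr_submodule_cyclic:
  assumes gr: "graded_ring R gR" and gm: "graded_module R gR M gM" and y: "y \<in> gM k"
  shows "gr_submodule R M gM ((\<lambda>r. r \<odot>\<^bsub>M\<^esub> y) ` carrier R)"
proof -
  have ggM: "graded_group M gM" and "module R M" using gm unfolding graded_module_def by auto
  have ggR: "graded_group R gR" using gr unfolding graded_ring_def by auto
  interpret module R M by fact
  have yc: "y \<in> carrier M" using y graded_group_subset[OF ggM] by blast
  show ?thesis unfolding gr_submodule_def
  proof (intro conjI ballI allI)
    show "submodule ((\<lambda>r. r \<odot>\<^bsub>M\<^esub> y) ` carrier R) R M"
    proof (rule submoduleI)
      show "\<zero>\<^bsub>M\<^esub> \<in> (\<lambda>r. r \<odot>\<^bsub>M\<^esub> y) ` carrier R"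
        using smult_l_null[OF yc] by (metis R.zero_closed image_eqI)
    next
      fix a assume "a \<in> (\<lambda>r. r \<odot>\<^bsub>M\<^esub> y) ` carrier R"
      then show "\<ominus>\<^bsub>M\<^esub> a \<in> (\<lambda>r. r \<odot>\<^bsub>M\<^esub> y) ` carrier R"
        using smult_l_minus[OF _ yc] by (auto intro: image_eqI[OF sym])
    next
      fix a b assume "a \<in> (\<lambda>r. r \<odot>\<^bsub>M\<^esub> y) ` carrier R" "b \<in> (\<lambda>r. r \<odot>\<^bsub>M\<^esub> y) ` carrier R"
      then show "a \<oplus>\<^bsub>M\<^esub> b \<in> (\<lambda>r. r \<odot>\<^bsub>M\<^esub> y) ` carrier R"
        using smult_l_distr[OF _ _ yc] by (auto intro: image_eqI[OF sym])
    next
      fix a x assume "a \<in> carrier R" "x \<in> (\<lambda>r. r \<odot>\<^bsub>M\<^esub> y) ` carrier R"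
      then show "a \<odot>\<^bsub>M\<^esub> x \<in> (\<lambda>r. r \<odot>\<^bsub>M\<^esub> y) ` carrier R"
        using smult_assoc1[OF _ _ yc] by (auto intro: image_eqI[OF sym])
    qed (use yc in auto)
  next
    fix x i assume "x \<in> (\<lambda>r. r \<odot>\<^bsub>M\<^esub> y) ` carrier R"
    then obtain r where r: "r \<in> carrier R" "x = r \<odot>\<^bsub>M\<^esub> y" by blast
    then have "hcomp M gM i x = hcomp R gR (i - k) r \<odot>\<^bsub>M\<^esub> y"
      using hcomp_smult_homogeneous[OF gr gm y] by simp
    then show "hcomp M gM i x \<in> (\<lambda>r. r \<odot>\<^bsub>M\<^esub> y) ` carrier R"
      using hcomp_closed[OF ggR r(1)] by blast
  qed
qed

subsection \<open>Linear maps and torsion\<close>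

lemma linear_on_zero:
  assumes "module R M" and "module R N" and f: "linear_on R M N (carrier M) f"
  shows "f \<zero>\<^bsub>M\<^esub> = \<zero>\<^bsub>N\<^esub>"
proof -
  interpret M: module R M by fact
  interpret N: module R N by fact
  have z: "\<zero>\<^bsub>M\<^esub> \<in> carrier M" by simp
  then have fz: "f \<zero>\<^bsub>M\<^esub> \<in> carrier N" using f unfolding linear_on_def by blast
  have "f (\<zero>\<^bsub>R\<^esub> \<odot>\<^bsub>M\<^esub> \<zero>\<^bsub>M\<^esub>) = \<zero>\<^bsub>R\<^esub> \<odot>\<^bsub>N\<^esub> f \<zero>\<^bsub>M\<^esub>"
    using f z unfolding linear_on_def by (metis M.R.zero_closed)
  with fz show ?thesis by simp
qed

lemma linear_on_nonzero_hcomp: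
  assumes m: "module R M" and n: "module R N" and f: "linear_on R M N (carrier M) f"
    and gg: "graded_group M gM" and x: "x \<in> carrier M" and fx: "f x \<noteq> \<zero>\<^bsub>N\<^esub>"
  obtains k where "f (hcomp M gM k x) \<noteq> \<zero>\<^bsub>N\<^esub>"
proof (rule ccontr)
  interpret M: module R M by fact
  interpret N: module R N by fact
  assume "\<not> thesis"
  with that have "\<And>k. hcomp M gM k x \<in> {y \<in> carrier M. f y = \<zero>\<^bsub>N\<^esub>}"
    using hcomp_closed[OF gg x] by blast
  then have "x \<in> {y \<in> carrier M. f y = \<zero>\<^bsub>N\<^esub>}"
    using f linear_on_zero[OF m n f]
    by (intro graded_group_mem_if_hcomp_mem[OF gg M.abelian_group_axioms x])
      (auto simp: linear_on_def)
  with fx show False by blast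
qed

lemma annihilated_outside_prime_add:
  assumes "module R M" and "primeideal P R" and a: "a \<in> carrier M" and b: "b \<in> carrier M"
    and s: "s \<in> carrier R - P" "s \<odot>\<^bsub>M\<^esub> a = \<zero>\<^bsub>M\<^esub>"
    and t: "t \<in> carrier R - P" "t \<odot>\<^bsub>M\<^esub> b = \<zero>\<^bsub>M\<^esub>"
  shows "s \<otimes>\<^bsub>R\<^esub> t \<in> carrier R - P" and "(s \<otimes>\<^bsub>R\<^esub> t) \<odot>\<^bsub>M\<^esub> (a \<oplus>\<^bsub>M\<^esub> b) = \<zero>\<^bsub>M\<^esub>"
proof -
  interpret module R M by fact
  interpret primeideal P R by fact
  show "s \<otimes>\<^bsub>R\<^esub> t \<in> carrier R - P" using s t I_prime by blast
  have "(s \<otimes>\<^bsub>R\<^esub> t) \<odot>\<^bsub>M\<^esub> a = t \<odot>\<^bsub>M\<^esub> (s \<odot>\<^bsub>M\<^esub> a)"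
    using s t a R.m_comm[of s t] smult_assoc1[of t s a] by simp
  moreover have "(s \<otimes>\<^bsub>R\<^esub> t) \<odot>\<^bsub>M\<^esub> b = s \<odot>\<^bsub>M\<^esub> (t \<odot>\<^bsub>M\<^esub> b)"
    using s t b by (simp add: smult_assoc1)
  ultimately show "(s \<otimes>\<^bsub>R\<^esub> t) \<odot>\<^bsub>M\<^esub> (a \<oplus>\<^bsub>M\<^esub> b) = \<zero>\<^bsub>M\<^esub>"
    using s t a b by (simp add: smult_r_distr)
qed

lemma not_localization_zero_homogeneous:
  assumes m: "module R M" and gg: "graded_group M gM" and p: "primeideal P R"
    and "\<not> localization_zero R P M"
  obtains k y where "y \<in> gM k" and "\<And>r. r \<in> carrier R \<Longrightarrow> r \<odot>\<^bsub>M\<^esub> y = \<zero>\<^bsub>M\<^esub> \<Longrightarrow> r \<in> P"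
proof -
  interpret module R M by fact
  interpret primeideal P R by fact
  define Z where "Z = {y \<in> carrier M. \<exists>s\<in>carrier R - P. s \<odot>\<^bsub>M\<^esub> y = \<zero>\<^bsub>M\<^esub>}"
  obtain x where x: "x \<in> carrier M" and "x \<notin> Z"
    using assms(4) unfolding localization_zero_def Z_def by blast
  have "\<exists>k. hcomp M gM k x \<notin> Z"
  proof (rule ccontr)
    assume "\<not> (\<exists>k. hcomp M gM k x \<notin> Z)"
    then have comp: "\<And>k. hcomp M gM k x \<in> Z" by blast
    have "\<one>\<^bsub>R\<^esub> \<in> carrier R - P" using one_imp_carrier I_notcarr by blast
    then have zero: "\<zero>\<^bsub>M\<^esub> \<in> Z" unfolding Z_def by force
    have add: "a \<oplus>\<^bsub>M\<^esub> b \<in> Z" if "a \<in> Z" "b \<in> Z" for a b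
    proof -
      from that obtain s t where "a \<in> carrier M" "b \<in> carrier M"
        "s \<in> carrier R - P" "s \<odot>\<^bsub>M\<^esub> a = \<zero>\<^bsub>M\<^esub>" "t \<in> carrier R - P" "t \<odot>\<^bsub>M\<^esub> b = \<zero>\<^bsub>M\<^esub>"
        unfolding Z_def by blast
      from annihilated_outside_prime_add[OF m p this] \<open>a \<in> carrier M\<close> \<open>b \<in> carrier M\<close>
      show ?thesis unfolding Z_def by blast
    qed
    have "x \<in> Z" by (rule graded_group_mem_if_hcomp_mem[OF gg abelian_group_axioms x zero add comp])
    with \<open>x \<notin> Z\<close> show False by contradiction
  qed
  then obtain k where "hcomp M gM k x \<notin> Z" by blast
  then show thesis
    using that[OF hcomp_in_grade[OF gg x]] hcomp_closed[OF gg x] unfolding Z_def by blast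
qed

subsection \<open>The module \<open>R/P\<close>\<close>

lemma quot_module_simps:
  "carrier (quot_module R P) = a_rcosets\<^bsub>R\<^esub> P"
  "\<zero>\<^bsub>quot_module R P\<^esub> = P"
  "C \<oplus>\<^bsub>quot_module R P\<^esub> D = C <+>\<^bsub>R\<^esub> D"
  "r \<odot>\<^bsub>quot_module R P\<^esub> C = rcoset_mult R P (P +>\<^bsub>R\<^esub> r) C"
  by (simp_all add: quot_module_def)

lemma quot_module_coset_closed:
  "ideal P R \<Longrightarrow> a \<in> carrier R \<Longrightarrow> P +>\<^bsub>R\<^esub> a \<in> carrier (quot_module R P)"
  unfolding quot_module_simps
  by (meson ideal.Icarr ring.is_abelian_group abelian_group.a_rcosetsI ideal.axioms(2) subsetI)

lemma quot_module_cosetE: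
  assumes "C \<in> carrier (quot_module R P)"
  obtains a where "a \<in> carrier R" and "C = P +>\<^bsub>R\<^esub> a"
  using assms unfolding quot_module_simps A_RCOSETS_def' by blast

lemma quot_module_add_coset:
  assumes "ideal P R" and "a \<in> carrier R" and "b \<in> carrier R"
  shows "(P +>\<^bsub>R\<^esub> a) \<oplus>\<^bsub>quot_module R P\<^esub> (P +>\<^bsub>R\<^esub> b) = P +>\<^bsub>R\<^esub> (a \<oplus>\<^bsub>R\<^esub> b)"
proof -
  interpret ideal P R by fact
  show ?thesis unfolding quot_module_simps by (rule a_rcos_sum) fact+
qed

lemma quot_module_smult_coset:
  "ideal P R \<Longrightarrow> r \<in> carrier R \<Longrightarrow> a \<in> carrier R \<Longrightarrow>
    r \<odot>\<^bsub>quot_module R P\<^esub> (P +>\<^bsub>R\<^esub> a) = P +>\<^bsub>R\<^esub> (r \<otimes>\<^bsub>R\<^esub> a)"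
  unfolding quot_module_simps by (rule ideal.rcoset_mult_add)

lemma coset_eq_ideal_iff:
  assumes "ideal P R" and a: "a \<in> carrier R"
  shows "P +>\<^bsub>R\<^esub> a = P \<longleftrightarrow> a \<in> P"
proof -
  interpret ideal P R by fact
  show ?thesis using a_rcos_const a_rcos_self[OF a] by metis
qed

lemma coset_eqI:
  assumes "ideal P R" and a: "a \<in> carrier R" and b: "b \<in> carrier R" and ab: "a \<ominus>\<^bsub>R\<^esub> b \<in> P"
  shows "P +>\<^bsub>R\<^esub> a = P +>\<^bsub>R\<^esub> b"
proof -
  interpret ideal P R by fact
  have "a \<in> P +>\<^bsub>R\<^esub> b" using a_rcos_module_minus[OF ring_axioms b a] ab by simp
  then show ?thesis using a_repr_independence' b by metis
qed

lemma linear_on_quot_module_coset: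
  assumes id: "ideal P R" and "module R N"
    and f: "linear_on R (quot_module R P) N (carrier (quot_module R P)) f"
  shows linear_on_quot_coset_closed: "\<And>a. a \<in> carrier R \<Longrightarrow> f (P +>\<^bsub>R\<^esub> a) \<in> carrier N"
    and linear_on_quot_coset_add: "\<And>a b. a \<in> carrier R \<Longrightarrow> b \<in> carrier R \<Longrightarrow>
        f (P +>\<^bsub>R\<^esub> (a \<oplus>\<^bsub>R\<^esub> b)) = f (P +>\<^bsub>R\<^esub> a) \<oplus>\<^bsub>N\<^esub> f (P +>\<^bsub>R\<^esub> b)"
    and linear_on_quot_coset_smult: "\<And>r a. r \<in> carrier R \<Longrightarrow> a \<in> carrier R \<Longrightarrow>
        f (P +>\<^bsub>R\<^esub> (r \<otimes>\<^bsub>R\<^esub> a)) = r \<odot>\<^bsub>N\<^esub> f (P +>\<^bsub>R\<^esub> a)"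
    and linear_on_quot_zero: "f P = \<zero>\<^bsub>N\<^esub>"
proof -
  interpret N: module R N by fact
  show closed: "\<And>a. a \<in> carrier R \<Longrightarrow> f (P +>\<^bsub>R\<^esub> a) \<in> carrier N"
    using f quot_module_coset_closed[OF id] unfolding linear_on_def by blast
  show "\<And>a b. a \<in> carrier R \<Longrightarrow> b \<in> carrier R \<Longrightarrow>
      f (P +>\<^bsub>R\<^esub> (a \<oplus>\<^bsub>R\<^esub> b)) = f (P +>\<^bsub>R\<^esub> a) \<oplus>\<^bsub>N\<^esub> f (P +>\<^bsub>R\<^esub> b)"
    using f quot_module_coset_closed[OF id] quot_module_add_coset[OF id]
    unfolding linear_on_def by metis
  show smult: "\<And>r a. r \<in> carrier R \<Longrightarrow> a \<in> carrier R \<Longrightarrow>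
      f (P +>\<^bsub>R\<^esub> (r \<otimes>\<^bsub>R\<^esub> a)) = r \<odot>\<^bsub>N\<^esub> f (P +>\<^bsub>R\<^esub> a)"
    using f quot_module_coset_closed[OF id] quot_module_smult_coset[OF id]
    unfolding linear_on_def by metis
  interpret ideal P R by fact
  have zero: "\<zero>\<^bsub>R\<^esub> \<in> carrier R" by simp
  have "\<zero>\<^bsub>R\<^esub> \<otimes>\<^bsub>R\<^esub> \<zero>\<^bsub>R\<^esub> \<in> P" by simp
  then have "P +>\<^bsub>R\<^esub> (\<zero>\<^bsub>R\<^esub> \<otimes>\<^bsub>R\<^esub> \<zero>\<^bsub>R\<^esub>) = P" by (rule a_rcos_const)
  then show "f P = \<zero>\<^bsub>N\<^esub>" using smult[OF zero zero] closed[OF zero] by simp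
qed

lemma quot_module_zero_closed:
  assumes "ideal P R"
  shows "P \<in> carrier (quot_module R P)"
proof -
  interpret ideal P R by fact
  have "P +>\<^bsub>R\<^esub> \<zero>\<^bsub>R\<^esub> = P" by (rule a_rcos_const) simp
  with quot_module_coset_closed[OF is_ideal zero_closed] show ?thesis by simp
qed

lemma linear_on_quot_inj_coset_zero:
  assumes id: "ideal P R" and N: "module R N"
    and f: "linear_on R (quot_module R P) N (carrier (quot_module R P)) f"
    and inj: "inj_on f (carrier (quot_module R P))"
    and a: "a \<in> carrier R" and fa: "f (P +>\<^bsub>R\<^esub> a) = \<zero>\<^bsub>N\<^esub>"
  shows "a \<in> P"
proof -
  have "f (P +>\<^bsub>R\<^esub> a) = f P" using fa linear_on_quot_zero[OF id N f] by simp
  then have "P +>\<^bsub>R\<^esub> a = P"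
    using inj_onD[OF inj] quot_module_coset_closed[OF id a] quot_module_zero_closed[OF id] by blast
  then show ?thesis using coset_eq_ideal_iff[OF id a] by blast
qed

lemma linear_on_quot_image_torsion_free:
  assumes p: "primeideal P R" and N: "module R N"
    and f: "linear_on R (quot_module R P) N (carrier (quot_module R P)) f"
    and inj: "inj_on f (carrier (quot_module R P))"
    and z: "z \<in> f ` carrier (quot_module R P)"
    and s: "s \<in> carrier R - P" and sz: "s \<odot>\<^bsub>N\<^esub> z = \<zero>\<^bsub>N\<^esub>"
  shows "z = \<zero>\<^bsub>N\<^esub>"
proof -
  interpret primeideal P R by fact
  have id: "ideal P R" by (rule is_ideal)
  obtain a where a: "a \<in> carrier R" and za: "z = f (P +>\<^bsub>R\<^esub> a)"
    using z quot_module_cosetE by blast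
  have "f (P +>\<^bsub>R\<^esub> (s \<otimes>\<^bsub>R\<^esub> a)) = \<zero>\<^bsub>N\<^esub>"
    using linear_on_quot_coset_smult[OF id N f] s a sz za by simp
  then have "s \<otimes>\<^bsub>R\<^esub> a \<in> P"
    using linear_on_quot_inj_coset_zero[OF id N f inj] s a by blast
  with s a have "P +>\<^bsub>R\<^esub> a = P" using I_prime coset_eq_ideal_iff[OF id a] by blast
  then show ?thesis using za linear_on_quot_zero[OF id N f] by simp
qed

subsection \<open>Maps out of a cyclic module\<close>

lemma linear_on_cyclic_quot:
  assumes M: "module R M" and N: "module R N" and id: "ideal P R"
    and iota: "linear_on R (quot_module R P) N (carrier (quot_module R P)) iota"
    and m: "m \<in> carrier M" and ann: "\<And>r. r \<in> carrier R \<Longrightarrow> r \<odot>\<^bsub>M\<^esub> m = \<zero>\<^bsub>M\<^esub> \<Longrightarrow> r \<in> P"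
  obtains f where "linear_on R M N ((\<lambda>r. r \<odot>\<^bsub>M\<^esub> m) ` carrier R) f"
    and "\<And>r. r \<in> carrier R \<Longrightarrow> f (r \<odot>\<^bsub>M\<^esub> m) = iota (P +>\<^bsub>R\<^esub> r)"
proof
  interpret module R M by fact
  define f where "f y = iota (P +>\<^bsub>R\<^esub> (SOME r. r \<in> carrier R \<and> y = r \<odot>\<^bsub>M\<^esub> m))" for y
  show fr: "f (r \<odot>\<^bsub>M\<^esub> m) = iota (P +>\<^bsub>R\<^esub> r)" if r: "r \<in> carrier R" for r
  proof -
    define r' where "r' = (SOME r'. r' \<in> carrier R \<and> r \<odot>\<^bsub>M\<^esub> m = r' \<odot>\<^bsub>M\<^esub> m)"
    have "r' \<in> carrier R \<and> r \<odot>\<^bsub>M\<^esub> m = r' \<odot>\<^bsub>M\<^esub> m"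
      unfolding r'_def by (rule someI[of _ r]) (use r in simp)
    then have r': "r' \<in> carrier R" "r \<odot>\<^bsub>M\<^esub> m = r' \<odot>\<^bsub>M\<^esub> m" by auto
    have "(r \<ominus>\<^bsub>R\<^esub> r') \<odot>\<^bsub>M\<^esub> m = r \<odot>\<^bsub>M\<^esub> m \<ominus>\<^bsub>M\<^esub> r' \<odot>\<^bsub>M\<^esub> m"
      using smult_l_distr[OF r R.a_inv_closed[OF r'(1)] m] smult_l_minus[OF r'(1) m]
      by (simp add: R.minus_eq M.minus_eq)
    also have "\<dots> = \<zero>\<^bsub>M\<^esub>" using r'(2) m r'(1) by (simp add: M.r_neg M.minus_eq)
    finally have "r \<ominus>\<^bsub>R\<^esub> r' \<in> P" using ann r r'(1) by blast
    then have "P +>\<^bsub>R\<^esub> r = P +>\<^bsub>R\<^esub> r'" using coset_eqI[OF id r r'(1)] by simp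
    then show ?thesis unfolding f_def r'_def by (simp add: eq_commute)
  qed
  note coset = linear_on_quot_module_coset[OF id N iota]
  show "linear_on R M N ((\<lambda>r. r \<odot>\<^bsub>M\<^esub> m) ` carrier R) f"
    unfolding linear_on_def
  proof (intro conjI ballI)
    fix y assume "y \<in> (\<lambda>r. r \<odot>\<^bsub>M\<^esub> m) ` carrier R"
    then show "f y \<in> carrier N" using fr coset(1) by auto
  next
    fix y z assume "y \<in> (\<lambda>r. r \<odot>\<^bsub>M\<^esub> m) ` carrier R" "z \<in> (\<lambda>r. r \<odot>\<^bsub>M\<^esub> m) ` carrier R"
    then show "f (y \<oplus>\<^bsub>M\<^esub> z) = f y \<oplus>\<^bsub>N\<^esub> f z"
      using fr coset(2) by (auto simp: smult_l_distr[OF _ _ m, symmetric])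
  next
    fix a y assume "a \<in> carrier R" "y \<in> (\<lambda>r. r \<odot>\<^bsub>M\<^esub> m) ` carrier R"
    then show "f (a \<odot>\<^bsub>M\<^esub> y) = a \<odot>\<^bsub>N\<^esub> f y"
      using fr coset(3) by (auto simp: smult_assoc1[OF _ _ m, symmetric])
  qed
qed

lemma graded_hom_on_cyclic_quot:
  assumes gr: "graded_ring R gR" and gm: "graded_module R gR M gM" and m: "m \<in> gM k"
    and E: "module R E" and id: "ideal P R"
    and iota: "graded_hom_on R (quot_module R P) (quot_grading R gR P) E gE
      (carrier (quot_module R P)) 0 iota"
    and ann: "\<And>r. r \<in> carrier R \<Longrightarrow> r \<odot>\<^bsub>M\<^esub> m = \<zero>\<^bsub>M\<^esub> \<Longrightarrow> r \<in> P"
  obtains f where "graded_hom_on R M (\<lambda>j. gM (j + k)) E gE ((\<lambda>r. r \<odot>\<^bsub>M\<^esub> m) ` carrier R) 0 f"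
    and "f m = iota (P +>\<^bsub>R\<^esub> \<one>\<^bsub>R\<^esub>)"
proof -
  have ggM: "graded_group M gM" and "module R M" using gm unfolding graded_module_def by auto
  have ggR: "graded_group R gR" using gr unfolding graded_ring_def by auto
  interpret module R M by fact
  have mc: "m \<in> carrier M" using m graded_group_subset[OF ggM] by blast
  obtain f where f: "linear_on R M E ((\<lambda>r. r \<odot>\<^bsub>M\<^esub> m) ` carrier R) f"
    and fr: "\<And>r. r \<in> carrier R \<Longrightarrow> f (r \<odot>\<^bsub>M\<^esub> m) = iota (P +>\<^bsub>R\<^esub> r)"
    using linear_on_cyclic_quot[OF \<open>module R M\<close> E id _ mc ann] iota
    unfolding graded_hom_on_def by blast
  have "f y \<in> gE (j + 0)" if y: "y \<in> (\<lambda>r. r \<odot>\<^bsub>M\<^esub> m) ` carrier R \<inter> gM (j + k)" for j y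
  proof -
    obtain r where r: "r \<in> carrier R" "y = r \<odot>\<^bsub>M\<^esub> m" using y by blast
    have "y = hcomp M gM (j + k) y" using hcomp_homogeneous[OF ggM abelian_group_axioms, of y "j + k"] y by simp
    also have "\<dots> = hcomp R gR j r \<odot>\<^bsub>M\<^esub> m" using hcomp_smult_homogeneous[OF gr gm m r(1)] r(2) by simp
    finally have "f y = iota (P +>\<^bsub>R\<^esub> hcomp R gR j r)" using fr[OF hcomp_closed[OF ggR r(1)]] by simp
    moreover have "P +>\<^bsub>R\<^esub> hcomp R gR j r \<in> carrier (quot_module R P) \<inter> quot_grading R gR P j"
      using quot_module_coset_closed[OF id hcomp_closed[OF ggR r(1)]] hcomp_in_grade[OF ggR r(1)]
      unfolding quot_grading_def by blast
    ultimately show ?thesis using iota unfolding graded_hom_on_def by auto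
  qed
  with f have "graded_hom_on R M (\<lambda>j. gM (j + k)) E gE ((\<lambda>r. r \<odot>\<^bsub>M\<^esub> m) ` carrier R) 0 f"
    unfolding graded_hom_on_def by blast
  moreover have "f m = iota (P +>\<^bsub>R\<^esub> \<one>\<^bsub>R\<^esub>)" using fr[OF R.one_closed] mc by simp
  ultimately show thesis by (rule that)
qed

lemma gr_injective_envelope_homogeneous_torsion_free:
  assumes gr: "graded_ring R gR" and p: "primeideal P R"
    and env: "gr_injective_envelope T R gR (quot_module R P) gQ E gE iota"
    and y: "y \<in> gE k" and s: "s \<in> carrier R - P" and sy: "s \<odot>\<^bsub>E\<^esub> y = \<zero>\<^bsub>E\<^esub>"
  shows "y = \<zero>\<^bsub>E\<^esub>"
proof (rule ccontr)
  assume "y \<noteq> \<zero>\<^bsub>E\<^esub>"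
  interpret primeideal P R by fact
  have ge: "graded_module R gR E gE"
    and iota: "linear_on R (quot_module R P) E (carrier (quot_module R P)) iota"
    and inj: "inj_on iota (carrier (quot_module R P))"
    and ess: "gr_essential R E gE (iota ` carrier (quot_module R P))"
    using env unfolding gr_injective_envelope_def graded_hom_on_def by auto
  then have "module R E" and "graded_group E gE" unfolding graded_module_def by auto
  interpret E: module R E by fact
  have yc: "y \<in> carrier E" using y graded_group_subset[OF \<open>graded_group E gE\<close>] by blast
  define N where "N = (\<lambda>r. r \<odot>\<^bsub>E\<^esub> y) ` carrier R"
  have "gr_submodule R E gE N" unfolding N_def by (rule gr_submodule_cyclic[OF gr ge y])
  moreover have "y \<in> N" unfolding N_def using E.smult_one[OF yc] by (metis one_closed image_eqI)
  ultimately have "N \<inter> iota ` carrier (quot_module R P) \<noteq> {\<zero>\<^bsub>E\<^esub>}"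
    using ess \<open>y \<noteq> \<zero>\<^bsub>E\<^esub>\<close> unfolding gr_essential_def by blast
  moreover have "\<zero>\<^bsub>E\<^esub> \<in> N \<inter> iota ` carrier (quot_module R P)"
    unfolding N_def using E.smult_l_null[OF yc] quot_module_zero_closed[OF is_ideal]
      linear_on_quot_zero[OF is_ideal \<open>module R E\<close> iota] by (metis IntI zero_closed image_eqI)
  ultimately obtain z where z: "z \<in> N" "z \<in> iota ` carrier (quot_module R P)" "z \<noteq> \<zero>\<^bsub>E\<^esub>"
    by blast
  then obtain r where r: "r \<in> carrier R" "z = r \<odot>\<^bsub>E\<^esub> y" unfolding N_def by blast
  have "s \<odot>\<^bsub>E\<^esub> z = r \<odot>\<^bsub>E\<^esub> (s \<odot>\<^bsub>E\<^esub> y)"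
    using r s yc E.smult_assoc1 m_comm by (metis DiffD1)
  with sy r have "s \<odot>\<^bsub>E\<^esub> z = \<zero>\<^bsub>E\<^esub>" by simp
  with z(2,3) show False
    using linear_on_quot_image_torsion_free[OF p \<open>module R E\<close> iota inj _ s] by blast
qed

lemma localization_zero_imp_Hombar_zero:
  assumes gr: "graded_ring R gR" and p: "primeideal P R" and gm: "graded_module R gR M gM"
    and env: "gr_injective_envelope T R gR (quot_module R P) gQ E gE iota"
    and LZ: "localization_zero R P M"
  shows "Hombar_zero R M gM E gE"
  unfolding Hombar_zero_def
proof (intro allI impI ballI)
  fix d f x assume hf: "graded_hom_on R M gM E gE (carrier M) d f" and x: "x \<in> carrier M"
  have "module R M" and ggM: "graded_group M gM" using gm unfolding graded_module_def by auto
  have "module R E" using env unfolding gr_injective_envelope_def graded_module_def by auto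
  have f: "linear_on R M E (carrier M) f" and fdeg: "\<forall>j. \<forall>x\<in>carrier M \<inter> gM j. f x \<in> gE (j + d)"
    using hf unfolding graded_hom_on_def by auto
  show "f x = \<zero>\<^bsub>E\<^esub>"
  proof (rule ccontr)
    assume "f x \<noteq> \<zero>\<^bsub>E\<^esub>"
    then obtain k where fm: "f (hcomp M gM k x) \<noteq> \<zero>\<^bsub>E\<^esub>"
      using linear_on_nonzero_hcomp[OF \<open>module R M\<close> \<open>module R E\<close> f ggM x] by blast
    define m where "m = hcomp M gM k x"
    have m: "m \<in> carrier M" "m \<in> gM k"
      unfolding m_def using hcomp_closed[OF ggM x] hcomp_in_grade[OF ggM x] by auto
    obtain s where s: "s \<in> carrier R - P" "s \<odot>\<^bsub>M\<^esub> m = \<zero>\<^bsub>M\<^esub>"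
      using LZ m unfolding localization_zero_def by blast
    then have "s \<odot>\<^bsub>E\<^esub> f m = \<zero>\<^bsub>E\<^esub>"
      using f m linear_on_zero[OF \<open>module R M\<close> \<open>module R E\<close> f] unfolding linear_on_def by force
    moreover have "f m \<in> gE (k + d)" using fdeg m by blast
    ultimately have "f m = \<zero>\<^bsub>E\<^esub>"
      using gr_injective_envelope_homogeneous_torsion_free[OF gr p env _ s(1)] by blast
    with fm show False unfolding m_def by contradiction
  qed
qed

lemma Hombar_zero_imp_localization_zero:
  fixes M :: "('a, 'm) module"
  assumes gr: "graded_ring R gR" and p: "primeideal P R" and gm: "graded_module R gR M gM"
    and env: "gr_injective_envelope TYPE('m) R gR (quot_module R P) (quot_grading R gR P) E gE iota"
    and HZ: "Hombar_zero R M gM E gE"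
  shows "localization_zero R P M"
proof (rule ccontr)
  assume "\<not> localization_zero R P M"
  interpret primeideal P R by fact
  have "module R M" and ggM: "graded_group M gM" using gm unfolding graded_module_def by auto
  interpret M: module R M by fact
  have "graded_module R gR E gE"
    and iota: "graded_hom_on R (quot_module R P) (quot_grading R gR P) E gE
      (carrier (quot_module R P)) 0 iota"
    and inj: "inj_on iota (carrier (quot_module R P))"
    and E_inj: "gr_injective TYPE('m) R gR E gE"
    using env unfolding gr_injective_envelope_def by auto
  then have "module R E" unfolding graded_module_def by auto
  obtain k m where m: "m \<in> gM k" and ann: "\<And>r. r \<in> carrier R \<Longrightarrow> r \<odot>\<^bsub>M\<^esub> m = \<zero>\<^bsub>M\<^esub> \<Longrightarrow> r \<in> P"
    using not_localization_zero_homogeneous[OF \<open>module R M\<close> ggM p] \<open>\<not> localization_zero R P M\<close> by blast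
  have mc: "m \<in> carrier M" using m graded_group_subset[OF ggM] by blast
  define A where "A = (\<lambda>r. r \<odot>\<^bsub>M\<^esub> m) ` carrier R"
  obtain f where f: "graded_hom_on R M (\<lambda>j. gM (j + k)) E gE A 0 f"
    and fm: "f m = iota (P +>\<^bsub>R\<^esub> \<one>\<^bsub>R\<^esub>)"
    using graded_hom_on_cyclic_quot[OF gr gm m \<open>module R E\<close> is_ideal iota ann] unfolding A_def by blast
  have "gr_submodule R M (\<lambda>j. gM (j + k)) A"
    unfolding A_def by (rule gr_submodule_shift[OF ggM M.abelian_group_axioms gr_submodule_cyclic[OF gr gm m]])
  with E_inj f graded_module_shift[OF gm] obtain h
    where h: "graded_hom_on R M (\<lambda>j. gM (j + k)) E gE (carrier M) 0 h" and hf: "\<forall>y\<in>A. h y = f y"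
    unfolding gr_injective_def by blast
  from h have "graded_hom_on R M gM E gE (carrier M) (0 - k) h" by (rule graded_hom_on_shift[THEN iffD1])
  with HZ mc have "h m = \<zero>\<^bsub>E\<^esub>" unfolding Hombar_zero_def by blast
  moreover have "m \<in> A" unfolding A_def using M.smult_one[OF mc] by (metis one_closed image_eqI)
  ultimately have "iota (P +>\<^bsub>R\<^esub> \<one>\<^bsub>R\<^esub>) = \<zero>\<^bsub>E\<^esub>" using hf fm by simp
  then have "\<one>\<^bsub>R\<^esub> \<in> P"
    using linear_on_quot_inj_coset_zero[OF is_ideal \<open>module R E\<close> _ inj one_closed] iota
    unfolding graded_hom_on_def by blast
  then show False using one_imp_carrier I_notcarr by blast
qed

theorem mainTheorem10:
  fixes R :: "'a ring" and gR :: "int \<Rightarrow> 'a set" and P :: "'a set"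
    and M :: "('a, 'm) module" and gM :: "int \<Rightarrow> 'm set"
    and E :: "('a, 'e) module" and gE :: "int \<Rightarrow> 'e set" and iota :: "'a set \<Rightarrow> 'e"
  assumes "graded_ring R gR"
    and "homogeneous_ideal R gR P" and "primeideal P R"
    and "graded_module R gR M gM"
    and "gr_injective_envelope TYPE('m) R gR (quot_module R P) (quot_grading R gR P) E gE iota"
  shows "localization_zero R P M \<longleftrightarrow> Hombar_zero R M gM E gE"
  using localization_zero_imp_Hombar_zero[OF assms(1,3,4,5)]
    Hombar_zero_imp_localization_zero[OF assms(1,3,4,5)] by blast

end
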